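(* Let $Q\in\mathcal{P}$ be a distribution whose support contains at least two points. Then for every $v>0$ there is a measurable map $\pi:\Omega\to\{1,2\}$ such that $$D^*(v,Q)=D^*(v,\pi(Q)).$$
   Context: Let $(\Omega,\mathcal{F},\mu)$ be a finite or $\sigma$-finite measure space, and let $\mathcal{P}$ be the set of probability measures on $(\Omega,\mathcal{F})$ absolutely continuous with respect to $\mu$. For $P,Q\in\mathcal{P}$ the lower-case letters $p,q$ denote their densities with respect to $\mu$. The Kullback–Leibler divergence is $D(P\Vert Q)=\int\ln\frac{dP}{dQ}\,dP$ if $P\ll Q$, and $+\infty$ otherwise. The total variation distance is $V(P,Q)=\int_\Omega|p-q|\,d\mu$. For $v>0$ define $D^*(v,Q)=\inf\{D(P\Vert Q):P\in\mathcal{P},\ V(P,Q)\ge v\}$, with $\inf\emptyset=+\infty$. The same definitions apply to distributions on $\{1,2\}$, taking the counting measure as reference measure. For a measurable map $\pi:\Omega\to\{1,2\}$, $\pi(Q)$ denotes the distribution $(Q(\pi^{-1}(1)),Q(\pi^{-1}(2)))$ on $\{1,2\}$. *)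

theory Defs
  imports "HOL-Probability.Probability"
begin

definition probs :: "'a measure \<Rightarrow> 'a measure set" where
  "probs M = {P. sets P = sets M \<and> prob_space P \<and> absolutely_continuous M P}"

definition dens :: "'a measure \<Rightarrow> 'a measure \<Rightarrow> 'a \<Rightarrow> real" where
  "dens M P x = enn2real (RN_deriv M P x)"

definition tvd :: "'a measure \<Rightarrow> 'a measure \<Rightarrow> 'a measure \<Rightarrow> real" where
  "tvd M P Q = enn2real (\<integral>\<^sup>+ x. ennreal \<bar>dens M P x - dens M Q x\<bar> \<partial>M)"

definition KL :: "'a measure \<Rightarrow> 'a measure \<Rightarrow> ereal" where
  "KL P Q = (if absolutely_continuous Q P
     then enn2ereal (\<integral>\<^sup>+ x. ennreal (ln (enn2real (RN_deriv Q P x))) \<partial>P)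
        - enn2ereal (\<integral>\<^sup>+ x. ennreal (- ln (enn2real (RN_deriv Q P x))) \<partial>P)
     else \<infinity>)"

definition Dstar :: "'a measure \<Rightarrow> real \<Rightarrow> 'a measure \<Rightarrow> ereal" where
  "Dstar M v Q = Inf {KL P Q | P. P \<in> probs M \<and> tvd M P Q \<ge> v}"

end

(*
  D*(v,Q) depends on Q only through the values Q(A). If V(P,Q) >= v and D(P||Q) < oo, the set
  A = {dP/dQ > 1} satisfies V(P,Q) = 2 (P(A) - Q(A)), and the log-sum inequality on A and its
  complement gives D(P||Q) >= d(P(A) || Q(A)), where d is the binary divergence. Conversely every
  pair (b, Q(A)) is realised by the P that is proportional to Q on A and on its complement, with
  masses b and 1 - b. Hence D*(v,Q) = inf_A g(Q(A)) with g(a) = inf {d(b || a) : |b - a| >= v/2}.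

  The range of Q is compact: it is the sum of the set of subseries sums of the atom masses, a
  continuous image of the Cantor space, and of the interval [0, Q(N)] filled by the non-atomic
  part N (Sierpinski). As g blows up at 0 and 1, it attains its infimum over this range at some
  Q(A). The map sending A to 1 and its complement to 2 pushes Q to a distribution whose values
  are 0, Q(A), 1 - Q(A) and 1, and g is symmetric under a |-> 1 - a, so both sides equal g(Q(A)).
*)
theory Submission
  imports Defs "HOL-Real_Asymp.Real_Asymp"
begin

section \<open>The range of a probability measure is closed\<close>

lemma compact_range_subseries:
  fixes m :: "nat \<Rightarrow> real"
  assumes "summable (\<lambda>k. \<bar>m k\<bar>)"
  shows "compact (range (\<lambda>S. \<Sum>k. indicator S k * m k))"
proof -
  let ?C = "UNIV \<rightarrow>\<^sub>E {0, 1::real}"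
  let ?sum = "\<lambda>f :: nat \<Rightarrow> real. \<Sum>k. f k * m k"
  have "compactin (product_topology (\<lambda>_. euclidean) UNIV) ?C"
    by (simp add: compactin_PiE)
  then have C: "compact ?C"
    by (simp add: euclidean_product_topology)
  have "uniform_limit ?C (\<lambda>n f. \<Sum>k<n. f k * m k) ?sum sequentially"
  proof (rule Weierstrass_m_test[OF _ assms])
    fix n and f :: "nat \<Rightarrow> real" assume "f \<in> ?C"
    then show "norm (f n * m n) \<le> \<bar>m n\<bar>" by (cases "f n = 0") (auto simp: PiE_iff)
  qed
  then have "continuous_on ?C ?sum"
    by (rule uniform_limit_theorem[rotated]) (auto intro!: continuous_intros always_eventually continuous_on_subset[OF continuous_on_product_coordinates])
  moreover have "range (\<lambda>S. \<Sum>k. indicator S k * m k) = ?sum ` ?C"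
  proof (intro equalityI subsetI)
    fix x assume "x \<in> range (\<lambda>S. \<Sum>k. indicator S k * m k)"
    then obtain S where "x = ?sum (indicator S)" by blast
    moreover have "indicator S \<in> ?C" by (auto simp: indicator_def)
    ultimately show "x \<in> ?sum ` ?C" by blast
  next
    fix x assume "x \<in> ?sum ` ?C"
    then obtain f where f: "f \<in> ?C" "x = ?sum f" by blast
    then have "f = indicator {k. f k = 1}" by (force simp: PiE_iff indicator_def)
    then have "x = (\<Sum>k. indicator {k. f k = 1} k * m k)" using f(2) by simp
    then show "x \<in> range (\<lambda>S. \<Sum>k. indicator S k * m k)" by blast
  qed
  ultimately show ?thesis using compact_continuous_image[OF _ C] by simp
qed

lemma half_maximal_exists:
  fixes f :: "'b \<Rightarrow> real"
  assumes "x0 \<in> S" "bdd_above (f ` S)" "\<And>x. x \<in> S \<Longrightarrow> 0 \<le> f x"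
  shows "\<exists>x\<in>S. \<forall>y\<in>S. f y \<le> 2 * f x"
proof -
  have le_Sup: "f y \<le> Sup (f ` S)" if "y \<in> S" for y
    using that assms(2) by (intro cSup_upper) auto
  show ?thesis
  proof (cases "Sup (f ` S) > 0")
    case True
    then have "Sup (f ` S) / 2 < Sup (f ` S)" by simp
    then obtain x where "x \<in> S" "Sup (f ` S) / 2 < f x"
      using less_cSup_iff[of "f ` S"] assms(1,2) by blast
    then show ?thesis using le_Sup by force
  next
    case False
    then show ?thesis using le_Sup assms by force
  qed
qed

definition is_atom :: "'a measure \<Rightarrow> 'a set \<Rightarrow> bool" where
  "is_atom M A \<longleftrightarrow> A \<in> sets M \<and> measure M A > 0 \<and>
     (\<forall>B\<in>sets M. B \<subseteq> A \<longrightarrow> measure M B = 0 \<or> measure M B = measure M A)"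

context prob_space
begin

text \<open>Choosing at each step a set of at least half the largest admissible measure forces the
  measures of all sets admissible at every step to zero.\<close>
lemma exhausting_sequence:
  assumes adm: "\<And>C F. Adm C F \<Longrightarrow> F \<in> events \<and> F \<inter> C = {}" and adm_empty: "\<And>C. Adm C {}"
  shows "\<exists>F :: nat \<Rightarrow> 'a set. (\<forall>k. Adm (\<Union>i<k. F i) (F k)) \<and> disjoint_family F \<and>
           (\<forall>G. (\<forall>k. Adm (\<Union>i<k. F i) G) \<longrightarrow> prob G = 0)"
proof -
  have "\<forall>C. \<exists>F. Adm C F \<and> (\<forall>G. Adm C G \<longrightarrow> prob G \<le> 2 * prob F)"
  proof
    fix C
    have "bdd_above (prob ` Collect (Adm C))" by (intro bdd_aboveI[of _ 1]) auto
    then show "\<exists>F. Adm C F \<and> (\<forall>G. Adm C G \<longrightarrow> prob G \<le> 2 * prob F)"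
      using half_maximal_exists[of "{}" "Collect (Adm C)" prob] adm_empty by auto
  qed
  then have "\<exists>step. \<forall>C. Adm C (step C) \<and> (\<forall>G. Adm C G \<longrightarrow> prob G \<le> 2 * prob (step C))"
    by (rule choice)
  then obtain step where step: "\<forall>C. Adm C (step C) \<and> (\<forall>G. Adm C G \<longrightarrow> prob G \<le> 2 * prob (step C))"
    by blast
  define C where "C = rec_nat {} (\<lambda>_ C. C \<union> step C)"
  define F where "F k = step (C k)" for k
  have C_0: "C 0 = {}" and C_Suc: "C (Suc k) = C k \<union> F k" for k
    by (simp_all add: C_def F_def)
  have C_eq: "C k = (\<Union>i<k. F i)" for k
    by (induction k) (auto simp: C_0 C_Suc lessThan_Suc)
  have F_adm: "Adm (\<Union>i<k. F i) (F k)" for k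
    unfolding C_eq[symmetric] unfolding F_def using step by blast
  have F_events: "F k \<in> events" and F_new: "F k \<inter> (\<Union>i<k. F i) = {}" for k
    using adm[OF F_adm] by auto
  have disj: "disjoint_family F"
    unfolding disjoint_family_on_def
  proof (intro ballI impI)
    fix i j :: nat assume "i \<noteq> j"
    then consider "i < j" | "j < i" by linarith
    then show "F i \<inter> F j = {}"
      using F_new[of i] F_new[of j] by cases blast+
  qed
  have "(\<lambda>k. prob (F k)) sums prob (\<Union>k. F k)"
    using F_events disj by (intro finite_measure_UNION) auto
  then have "(\<lambda>k. prob (F k)) \<longlonglongrightarrow> 0"
    by (rule summable_LIMSEQ_zero[OF sums_summable])
  then have lim: "(\<lambda>k. 2 * prob (F k)) \<longlonglongrightarrow> 0"
    by (rule tendsto_mult_right_zero)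
  have "prob G = 0" if G: "\<forall>k. Adm (\<Union>i<k. F i) G" for G
  proof -
    have "prob G \<le> 2 * prob (F k)" for k
      using G unfolding C_eq[symmetric] unfolding F_def using step by blast
    then have "prob G \<le> 0" by (intro LIMSEQ_le_const[OF lim]) auto
    then show ?thesis using measure_nonneg[of M G] by linarith
  qed
  then show ?thesis using F_adm disj by blast
qed

lemma atom_decomposition:
  shows "\<exists>At :: nat \<Rightarrow> 'a set. disjoint_family At \<and> (\<forall>k. At k = {} \<or> is_atom M (At k)) \<and>
           (\<forall>B. B \<subseteq> space M - (\<Union>k. At k) \<longrightarrow> \<not> is_atom M B)"
proof -
  define Adm where "Adm C F \<longleftrightarrow> F = {} \<or> (is_atom M F \<and> F \<inter> C = {})" for C F
  have adm: "F \<in> events \<and> F \<inter> C = {}" if "Adm C F" for C F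
    using that by (auto simp: Adm_def is_atom_def)
  have adm_empty: "Adm C {}" for C by (simp add: Adm_def)
  obtain F :: "nat \<Rightarrow> 'a set" where F_adm: "\<forall>k. Adm (\<Union>i<k. F i) (F k)"
    and disj: "disjoint_family F" and null: "\<forall>G. (\<forall>k. Adm (\<Union>i<k. F i) G) \<longrightarrow> prob G = 0"
    using exhausting_sequence[of Adm, OF adm adm_empty] by blast
  have atoms: "F k = {} \<or> is_atom M (F k)" for k
    using F_adm[rule_format, of k] by (auto simp: Adm_def)
  have no_atom: "\<not> is_atom M B" if "B \<subseteq> space M - (\<Union>k. F k)" for B
  proof
    assume atom: "is_atom M B"
    then have "\<forall>k. Adm (\<Union>i<k. F i) B" using that by (auto simp: Adm_def)
    then have "prob B = 0" using null by blast
    then show False using atom by (simp add: is_atom_def)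
  qed
  show ?thesis using disj atoms no_atom by blast
qed

lemma nonatomic_small_subset:
  assumes E: "E \<in> events" "prob E > 0" and no_atom: "\<And>B. B \<subseteq> E \<Longrightarrow> \<not> is_atom M B"
    and "e > 0"
  obtains F where "F \<in> events" "F \<subseteq> E" "0 < prob F" "prob F \<le> e"
proof -
  have halving: "\<exists>F\<in>events. F \<subseteq> E \<and> 0 < prob F \<and> prob F \<le> prob E / 2^n" for n
  proof (induction n)
    case 0 then show ?case using E by auto
  next
    case (Suc n)
    then obtain F where F: "F \<in> events" "F \<subseteq> E" "0 < prob F" "prob F \<le> prob E / 2^n" by blast
    then obtain B where B: "B \<in> events" "B \<subseteq> F" "prob B \<noteq> 0" "prob B \<noteq> prob F"
      using no_atom[of F] unfolding is_atom_def by auto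
    have "prob B \<le> prob F" using B F by (intro finite_measure_mono) auto
    then have B_pos: "0 < prob B" "prob B < prob F" using B(3,4) measure_nonneg[of M B] by linarith+
    have "prob (F - B) = prob F - prob B" using B F by (intro finite_measure_Diff) auto
    moreover have half: "prob F / 2 \<le> prob E / 2^(Suc n)" using F(4) by simp
    ultimately have "prob B \<le> prob E / 2^(Suc n) \<or> prob (F - B) \<le> prob E / 2^(Suc n)"
      by linarith
    moreover have "F - B \<in> events" "0 < prob (F - B)"
      using B F B_pos \<open>prob (F - B) = _\<close> by auto
    ultimately show ?case using B B_pos F by blast
  qed
  obtain n where "(1/2::real)^n < e / prob E"
    using real_arch_pow_inv[of "e / prob E" "1/2"] E assms(4) by auto
  then have small: "prob E / 2^n < e" using E by (simp add: field_simps power_one_over)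
  obtain F where F: "F \<in> events" "F \<subseteq> E" "0 < prob F" "prob F \<le> prob E / 2^n"
    using halving[of n] by blast
  show ?thesis
  proof (rule that[OF F(1-3)])
    show "prob F \<le> e" using F(4) small by linarith
  qed
qed

lemma nonatomic_intermediate_value:
  assumes N: "N \<in> events" and no_atom: "\<And>B. B \<subseteq> N \<Longrightarrow> \<not> is_atom M B"
    and c: "0 \<le> c" "c \<le> prob N"
  obtains B where "B \<in> events" "B \<subseteq> N" "prob B = c"
proof -
  define Adm where "Adm C F \<longleftrightarrow> F = {} \<or> (F \<in> events \<and> F \<subseteq> N - C \<and> prob C + prob F \<le> c)" for C F
  have adm: "F \<in> events \<and> F \<inter> C = {}" if "Adm C F" for C F
    using that by (auto simp: Adm_def)
  have adm_empty: "Adm C {}" for C by (simp add: Adm_def)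
  obtain F :: "nat \<Rightarrow> 'a set" where F_adm: "\<forall>k. Adm (\<Union>i<k. F i) (F k)"
    and null: "\<forall>G. (\<forall>k. Adm (\<Union>i<k. F i) G) \<longrightarrow> prob G = 0"
    using exhausting_sequence[of Adm, OF adm adm_empty] by blast
  define C where "C k = (\<Union>i<k. F i)" for k
  have F_events: "F k \<in> events" and F_N: "F k \<subseteq> N" for k
    using F_adm[rule_format, of k] by (auto simp: Adm_def)
  have C_events: "C k \<in> events" for k unfolding C_def using F_events by auto
  have C_le: "prob (C k) \<le> c" for k
  proof (induction k)
    case 0 then show ?case using c by (simp add: C_def)
  next
    case (Suc k)
    have C_Suc: "C (Suc k) = C k \<union> F k" unfolding C_def by (auto simp: lessThan_Suc)
    show ?case
    proof (cases "F k = {}")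
      case False
      then have F: "F k \<subseteq> N - C k" "prob (C k) + prob (F k) \<le> c"
        using F_adm[rule_format, of k] by (auto simp: Adm_def C_def)
      have "prob (C (Suc k)) = prob (C k) + prob (F k)"
        unfolding C_Suc using F C_events F_events by (intro finite_measure_Union) auto
      then show ?thesis using F by simp
    qed (use Suc C_Suc in simp)
  qed
  define B where "B = (\<Union>k. F k)"
  have B: "B \<in> events" "B \<subseteq> N" and C_B: "C k \<subseteq> B" for k
    unfolding B_def C_def using F_events F_N by auto
  have "incseq C" unfolding C_def incseq_def by (intro allI impI UN_mono) auto
  then have "(\<lambda>k. prob (C k)) \<longlonglongrightarrow> prob (\<Union>k. C k)"
    using C_events by (intro finite_Lim_measure_incseq) auto
  moreover have "(\<Union>k. C k) = B" unfolding C_def B_def by auto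
  ultimately have B_le: "prob B \<le> c" using C_le by (intro LIMSEQ_le_const2[of "\<lambda>k. prob (C k)"]) auto
  have "prob B = c"
  proof (rule ccontr)
    assume "prob B \<noteq> c"
    then have gap: "0 < c - prob B" using B_le by simp
    have "prob (N - B) = prob N - prob B" using N B by (intro finite_measure_Diff) auto
    then have "0 < prob (N - B)" using gap c by simp
    obtain G where G: "G \<in> events" "G \<subseteq> N - B" "0 < prob G" "prob G \<le> c - prob B"
    proof (rule nonatomic_small_subset[of "N - B" "c - prob B"])
      show "N - B \<in> events" using N B by auto
      show "\<And>B'. B' \<subseteq> N - B \<Longrightarrow> \<not> is_atom M B'" using no_atom by blast
    qed (use gap \<open>0 < prob (N - B)\<close> in auto)
    have "\<forall>k. Adm (\<Union>i<k. F i) G"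
    proof
      fix k
      have "prob (C k) \<le> prob B" using C_B B by (intro finite_measure_mono) auto
      then show "Adm (\<Union>i<k. F i) G" using G C_B[of k] by (auto simp: Adm_def C_def)
    qed
    then have "prob G = 0" using null by blast
    then show False using G(3) by simp
  qed
  then show ?thesis using that B by blast
qed

lemma closed_range_prob: "closed {prob A | A. A \<in> events}"
proof -
  obtain At :: "nat \<Rightarrow> 'a set" where disj: "disjoint_family At"
    and atoms: "\<forall>k. At k = {} \<or> is_atom M (At k)"
    and no_atom: "\<forall>B. B \<subseteq> space M - (\<Union>k. At k) \<longrightarrow> \<not> is_atom M B"
    using atom_decomposition by blast
  define N where "N = space M - (\<Union>k. At k)"
  define m where "m k = prob (At k)" for k
  have At_events: "At k \<in> events" for k
    using atoms[rule_format, of k] by (auto simp: is_atom_def)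
  have N_events: "N \<in> events" unfolding N_def using At_events by measurable
  have decomp: "(\<lambda>k. prob (A \<inter> At k)) sums (prob A - prob (A \<inter> N))" if A: "A \<in> events" for A
  proof -
    have "disjoint_family (\<lambda>k. A \<inter> At k)"
      using disj unfolding disjoint_family_on_def by auto
    then have "(\<lambda>k. prob (A \<inter> At k)) sums prob (\<Union>k. A \<inter> At k)"
      using A At_events by (intro finite_measure_UNION) auto
    moreover have "prob A = prob (\<Union>k. A \<inter> At k) + prob (A \<inter> N)"
    proof -
      have "A = (\<Union>k. A \<inter> At k) \<union> (A \<inter> N)"
        using sets.sets_into_space[OF A] unfolding N_def by auto
      also have "prob \<dots> = prob (\<Union>k. A \<inter> At k) + prob (A \<inter> N)"
        using A At_events N_events by (intro finite_measure_Union) (auto simp: N_def)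
      finally show ?thesis .
    qed
    ultimately show ?thesis by simp
  qed
  have "(\<lambda>k. \<bar>m k\<bar>) sums prob (\<Union>k. At k)"
    unfolding m_def using At_events disj by (simp add: finite_measure_UNION subset_eq)
  then have compact_atomic: "compact (range (\<lambda>S. \<Sum>k. indicator S k * m k))"
    by (intro compact_range_subseries sums_summable)
  have "{prob A | A. A \<in> events} =
      {x + y | x y. x \<in> range (\<lambda>S. \<Sum>k. indicator S k * m k) \<and> y \<in> {0..prob N}}"
  proof (intro equalityI subsetI)
    fix p assume "p \<in> {prob A | A. A \<in> events}"
    then obtain A where A: "A \<in> events" "p = prob A" by blast
    define S where "S = {k. prob (A \<inter> At k) \<noteq> 0}"
    have "prob (A \<inter> At k) = indicator S k * m k" for k
    proof -
      have "A \<inter> At k \<in> events" using A At_events by blast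
      then have "prob (A \<inter> At k) = 0 \<or> prob (A \<inter> At k) = m k"
        using atoms[rule_format, of k] unfolding is_atom_def m_def by auto
      then show ?thesis by (auto simp: S_def indicator_def)
    qed
    then have "(\<lambda>k. indicator S k * m k) sums (prob A - prob (A \<inter> N))"
      using decomp[OF A(1)] by simp
    then have "p = (\<Sum>k. indicator S k * m k) + prob (A \<inter> N)"
      using A(2) by (simp add: sums_iff)
    moreover have "prob (A \<inter> N) \<le> prob N" using N_events by (intro finite_measure_mono) auto
    moreover have "(\<Sum>k. indicator S k * m k) \<in> range (\<lambda>S. \<Sum>k. indicator S k * m k)" by blast
    ultimately show "p \<in> {x + y | x y. x \<in> range (\<lambda>S. \<Sum>k. indicator S k * m k) \<and> y \<in> {0..prob N}}"
      by fastforce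
  next
    fix p assume "p \<in> {x + y | x y. x \<in> range (\<lambda>S. \<Sum>k. indicator S k * m k) \<and> y \<in> {0..prob N}}"
    then obtain x y where "p = x + y" "x \<in> range (\<lambda>S. \<Sum>k. indicator S k * m k)"
      and y: "0 \<le> y" "y \<le> prob N"
      by auto
    then obtain S where p: "p = (\<Sum>k. indicator S k * m k) + y" by blast
    obtain B where B: "B \<in> events" "B \<subseteq> N" "prob B = y"
    proof (rule nonatomic_intermediate_value[OF N_events _ y])
      show "\<And>B. B \<subseteq> N \<Longrightarrow> \<not> is_atom M B" using no_atom unfolding N_def by blast
    qed
    define A where "A = (\<Union>k\<in>S. At k) \<union> B"
    have A_events: "A \<in> events" unfolding A_def using At_events B by blast
    have "prob (A \<inter> At k) = indicator S k * m k" for k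
    proof (cases "k \<in> S")
      case True
      then have "A \<inter> At k = At k" unfolding A_def by blast
      then show ?thesis using True by (simp add: m_def)
    next
      case False
      have "At j \<inter> At k = {}" if "j \<in> S" for j
      proof -
        have "j \<noteq> k" using that False by blast
        then show ?thesis using disj by (intro disjoint_family_onD[of _ UNIV]) auto
      qed
      moreover have "B \<inter> At k = {}" using B(2) unfolding N_def by blast
      ultimately have "A \<inter> At k = {}" unfolding A_def by blast
      then show ?thesis using False by simp
    qed
    moreover have "A \<inter> N = B" using B(2) unfolding A_def N_def by blast
    ultimately have "(\<lambda>k. indicator S k * m k) sums (prob A - y)"
      using decomp[OF A_events] B(3) by simp
    then have "p = prob A" using p by (simp add: sums_iff)
    then show "p \<in> {prob A | A. A \<in> events}" using A_events by blast
  qed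
  moreover have "compact {x + y | x y. x \<in> range (\<lambda>S. \<Sum>k. indicator S k * m k) \<and> y \<in> {0..prob N}}"
    by (intro compact_sums compact_atomic compact_Icc)
  ultimately show ?thesis by (simp add: compact_imp_closed)
qed

end

section \<open>Divergences through Radon-Nikodym densities\<close>

lemma probsD:
  assumes "P \<in> probs M"
  shows "sets P = sets M" "space P = space M" "prob_space P" "absolutely_continuous M P"
  using assms sets_eq_imp_space_eq[of P M] unfolding probs_def by auto

lemma density_enn2real_RN_deriv:
  assumes "prob_space Q" "prob_space P" "sets P = sets Q" "absolutely_continuous Q P"
  shows "density Q (\<lambda>x. ennreal (enn2real (RN_deriv Q P x))) = P"
proof -
  interpret Q: prob_space Q by fact
  interpret P: prob_space P by fact
  have "AE x in Q. RN_deriv Q P x \<noteq> \<infinity>"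
    using assms(3,4) by (intro Q.RN_deriv_finite) unfold_locales
  then have "density Q (\<lambda>x. ennreal (enn2real (RN_deriv Q P x))) = density Q (RN_deriv Q P)"
    by (intro density_cong) (auto simp: less_top)
  also have "\<dots> = P" using assms(3,4) by (intro Q.density_RN_deriv) auto
  finally show ?thesis .
qed

lemma tvd_eq_integral_RN_deriv:
  assumes M: "sigma_finite_measure M" and Q: "Q \<in> probs M" and P: "P \<in> probs M"
    and ac: "absolutely_continuous Q P"
  shows "tvd M P Q = (\<integral>x. \<bar>enn2real (RN_deriv Q P x) - 1\<bar> \<partial>Q)"
proof -
  interpret M: sigma_finite_measure M by fact
  note sQ = probsD[OF Q] and sP = probsD[OF P]
  interpret Q: prob_space Q by (rule sQ(3))
  define q where "q = RN_deriv M Q"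
  define R where "R = RN_deriv Q P"
  have q_meas: "q \<in> borel_measurable M" unfolding q_def by simp
  have R_meas: "R \<in> borel_measurable M"
    unfolding R_def by (subst measurable_cong_sets[OF sQ(1)[symmetric] refl]) simp
  have Q_dens: "density M q = Q" unfolding q_def by (rule M.density_RN_deriv[OF sQ(4,1)])
  have "density Q R = P" unfolding R_def using sP(1) sQ(1) by (intro Q.density_RN_deriv[OF ac]) auto
  then have "density M (\<lambda>x. q x * R x) = P"
    using Q_dens density_density_eq[OF q_meas R_meas] by simp
  then have chain: "AE x in M. q x * R x = RN_deriv M P x"
    by (intro M.RN_deriv_unique) (use q_meas R_meas in measurable)
  have q_fin: "AE x in M. q x \<noteq> \<infinity>"
    unfolding q_def by (rule M.RN_deriv_finite[OF _ sQ(4,1)]) unfold_locales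
  have "(\<integral>\<^sup>+ x. ennreal \<bar>dens M P x - dens M Q x\<bar> \<partial>M) = (\<integral>\<^sup>+ x. q x * ennreal \<bar>enn2real (R x) - 1\<bar> \<partial>M)"
  proof (rule nn_integral_cong_AE)
    show "AE x in M. ennreal \<bar>dens M P x - dens M Q x\<bar> = q x * ennreal \<bar>enn2real (R x) - 1\<bar>"
      using chain q_fin
    proof eventually_elim
      case (elim x)
      have "dens M P x - dens M Q x = enn2real (q x) * (enn2real (R x) - 1)"
        unfolding dens_def elim(1)[symmetric] q_def[symmetric] by (simp add: enn2real_mult algebra_simps)
      then show ?case using elim(2) by (simp add: abs_mult ennreal_mult' less_top)
    qed
  qed
  also have "\<dots> = (\<integral>\<^sup>+ x. ennreal \<bar>enn2real (R x) - 1\<bar> \<partial>density M q)"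
    by (rule nn_integral_density[symmetric]) (use q_meas R_meas in measurable)
  finally show ?thesis
    unfolding tvd_def Q_dens R_def by (simp add: enn2real_nn_integral_eq_integral)
qed

lemma ereal_integral_eq_pos_minus_neg:
  assumes "integrable N f"
  shows "enn2ereal (\<integral>\<^sup>+x. ennreal (f x) \<partial>N) - enn2ereal (\<integral>\<^sup>+x. ennreal (- f x) \<partial>N) = ereal (\<integral>x. f x \<partial>N)"
proof -
  obtain r q where "0 \<le> r" "0 \<le> q" "(\<integral>\<^sup>+x. ennreal (f x)\<partial>N) = ennreal r"
    "(\<integral>\<^sup>+x. ennreal (- f x)\<partial>N) = ennreal q" "integral\<^sup>L N f = r - q"
    using integrableE[OF assms] by metis
  then show ?thesis by simp
qed

lemma mult_ln_ge_tangent: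
  fixes t c :: real
  assumes "0 \<le> t" "0 < c"
  shows "t * ln c + t - c \<le> t * ln t"
proof (cases "t = 0")
  case False
  then have t: "t > 0" using assms(1) by simp
  have "ln (c / t) \<le> c / t - 1" using t assms(2) by (intro ln_le_minus_one) auto
  then have "t * (ln c - ln t) \<le> t * (c / t - 1)"
    using t assms(2) by (intro mult_left_mono) (auto simp: ln_div)
  then show ?thesis using t by (simp add: algebra_simps)
qed (use assms in simp)

lemma KL_eq_integral_RN_deriv:
  assumes Q: "prob_space Q" and P: "prob_space P" and sets: "sets P = sets Q"
    and ac: "absolutely_continuous Q P"
    and int: "integrable Q (\<lambda>x. enn2real (RN_deriv Q P x) * ln (enn2real (RN_deriv Q P x)))"
  shows "KL P Q = ereal (\<integral>x. enn2real (RN_deriv Q P x) * ln (enn2real (RN_deriv Q P x)) \<partial>Q)"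
proof -
  define r where "r x = enn2real (RN_deriv Q P x)" for x
  have r_meas: "r \<in> borel_measurable Q" unfolding r_def by simp
  have P_dens: "density Q (\<lambda>x. ennreal (r x)) = P"
    unfolding r_def by (rule density_enn2real_RN_deriv[OF Q P sets ac])
  have r_nonneg: "0 \<le> r x" for x unfolding r_def by simp
  have "integrable Q (\<lambda>x. r x * ln (r x))" using int unfolding r_def .
  then have "integrable P (\<lambda>x. ln (r x))"
    unfolding P_dens[symmetric]
    by (subst integrable_density) (auto simp: r_meas r_nonneg intro: borel_measurable_ln)
  then have "KL P Q = ereal (\<integral>x. ln (r x) \<partial>P)"
    unfolding KL_def r_def[symmetric] using ac by (simp add: ereal_integral_eq_pos_minus_neg)
  also have "(\<integral>x. ln (r x) \<partial>P) = (\<integral>x. r x * ln (r x) \<partial>Q)"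
    unfolding P_dens[symmetric] by (subst integral_density) (use r_meas r_nonneg in auto)
  finally show ?thesis unfolding r_def .
qed

lemma KL_finite_imp_integrable:
  assumes Q: "prob_space Q" and P: "prob_space P" and sets: "sets P = sets Q" and fin: "KL P Q \<noteq> \<infinity>"
  shows "absolutely_continuous Q P"
    and "integrable Q (\<lambda>x. enn2real (RN_deriv Q P x) * ln (enn2real (RN_deriv Q P x)))"
proof -
  interpret Q: prob_space Q by fact
  show ac: "absolutely_continuous Q P" using fin unfolding KL_def by (auto split: if_splits)
  define r where "r x = enn2real (RN_deriv Q P x)" for x
  have r_meas: "r \<in> borel_measurable Q" unfolding r_def by simp
  have r_meas_P: "r \<in> borel_measurable P"
    unfolding r_def by (subst measurable_cong_sets[OF sets refl]) simp
  have P_dens: "density Q (\<lambda>x. ennreal (r x)) = P"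
    unfolding r_def by (rule density_enn2real_RN_deriv[OF Q P sets ac])
  define I where "I s = (\<integral>\<^sup>+ x. ennreal (s * ln (r x)) \<partial>P)" for s :: real
  have KL_I: "KL P Q = enn2ereal (I 1) - enn2ereal (I (-1))"
    unfolding KL_def I_def r_def using ac by simp
  txt \<open>The negative part is at most \<open>1\<close>, because \<open>- t ln t \<le> 1 - t\<close>.\<close>
  have "I (-1) = (\<integral>\<^sup>+ x. ennreal (- ln (r x)) \<partial>density Q (\<lambda>x. ennreal (r x)))"
    unfolding I_def P_dens by simp
  also have "\<dots> = (\<integral>\<^sup>+ x. ennreal (r x) * ennreal (- ln (r x)) \<partial>Q)"
    by (rule nn_integral_density) (use r_meas in measurable)
  also have "\<dots> \<le> (\<integral>\<^sup>+ x. 1 \<partial>Q)"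
  proof (rule nn_integral_mono)
    fix x
    have r_nonneg: "0 \<le> r x" unfolding r_def by simp
    then have "r x * ln 1 + r x - 1 \<le> r x * ln (r x)"
      by (intro mult_ln_ge_tangent) auto
    then have "r x * - ln (r x) \<le> 1" using r_nonneg by simp
    then show "ennreal (r x) * ennreal (- ln (r x)) \<le> 1"
      using r_nonneg by (simp add: ennreal_mult'[symmetric] ennreal_le_1)
  qed
  finally have neg_fin: "I (-1) \<noteq> \<infinity>" by (auto simp: top_unique Q.emeasure_space_1)
  have pos_fin: "I 1 \<noteq> \<infinity>"
  proof
    assume "I 1 = \<infinity>"
    then have "KL P Q = \<infinity>" using KL_I neg_fin by (simp add: less_top ennreal_minus_eq_top)
    then show False using fin by simp
  qed
  have "integrable P (\<lambda>x. ln (r x))"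
    using pos_fin neg_fin r_meas_P unfolding real_integrable_def I_def by auto
  then have "integrable Q (\<lambda>x. r x * ln (r x))"
    unfolding P_dens[symmetric] by (subst (asm) integrable_density) (auto simp: r_meas r_def)
  then show "integrable Q (\<lambda>x. enn2real (RN_deriv Q P x) * ln (enn2real (RN_deriv Q P x)))"
    unfolding r_def .
qed

lemma measure_eq_integral_RN_deriv:
  assumes Q: "prob_space Q" and P: "prob_space P" and sets: "sets P = sets Q"
    and ac: "absolutely_continuous Q P" and C: "C \<in> sets Q"
  shows "measure P C = (\<integral>x. enn2real (RN_deriv Q P x) * indicator C x \<partial>Q)"
proof -
  define r where "r x = enn2real (RN_deriv Q P x)" for x
  have r_meas: "r \<in> borel_measurable Q" and r_nonneg: "0 \<le> r x" for x unfolding r_def by simp_all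
  have "emeasure P C = (\<integral>\<^sup>+ x. ennreal (r x) * indicator C x \<partial>Q)"
    unfolding density_enn2real_RN_deriv[OF Q P sets ac, folded r_def, symmetric]
    using C r_meas by (simp add: emeasure_density)
  also have "\<dots> = (\<integral>\<^sup>+ x. ennreal (r x * indicator C x) \<partial>Q)"
    by (intro nn_integral_cong) (auto simp: indicator_def)
  finally have "measure P C = enn2real (\<integral>\<^sup>+ x. ennreal (r x * indicator C x) \<partial>Q)"
    unfolding measure_def by simp
  also have "\<dots> = (\<integral>x. r x * indicator C x \<partial>Q)"
    by (rule enn2real_nn_integral_eq_integral) (use r_meas C r_nonneg in auto)
  finally show ?thesis unfolding r_def .
qed

lemma integrable_enn2real_RN_deriv:
  assumes Q: "prob_space Q" and P: "prob_space P" and sets: "sets P = sets Q"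
    and ac: "absolutely_continuous Q P"
  shows "integrable Q (\<lambda>x. enn2real (RN_deriv Q P x))"
proof -
  interpret P: prob_space P by fact
  define r where "r x = enn2real (RN_deriv Q P x)" for x
  have "(\<integral>\<^sup>+ x. ennreal (r x) \<partial>Q) = emeasure P (space P)"
    unfolding density_enn2real_RN_deriv[OF Q P sets ac, folded r_def, symmetric]
    by (subst emeasure_density) (auto intro!: nn_integral_cong simp: indicator_def r_def)
  moreover have "r \<in> borel_measurable Q" unfolding r_def by simp
  ultimately have "integrable Q r"
    by (intro integrableI_nonneg) (auto simp: P.emeasure_space_1 r_def)
  then show ?thesis unfolding r_def .
qed

context prob_space
begin

lemma if_set_eq_indicator: "(\<lambda>x. if x \<in> A then u else w) = (\<lambda>x. w + (u - w) * indicator A x :: real)"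
  by (auto simp: fun_eq_iff indicator_def)

lemma integrable_if_set: "A \<in> events \<Longrightarrow> integrable M (\<lambda>x. if x \<in> A then u else w :: real)"
  unfolding if_set_eq_indicator
  by (intro Bochner_Integration.integrable_add integrable_mult_right integrable_real_indicator)
    (auto simp: less_top[symmetric])

lemma integral_if_set:
  "A \<in> events \<Longrightarrow> (\<integral>x. (if x \<in> A then u else w) \<partial>M) = u * prob A + w * (1 - prob A)"
  unfolding if_set_eq_indicator
  by (subst Bochner_Integration.integral_add)
    (auto intro!: integrable_real_indicator simp: less_top[symmetric] algebra_simps prob_space)

end


lemma absolutely_continuous_trans:
  assumes "absolutely_continuous M N" "absolutely_continuous N L" "sets N = sets M"
  shows "absolutely_continuous M L"
  using assms unfolding absolutely_continuous_def null_sets_def by auto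

lemma (in prob_space) log_sum_inequality:
  assumes r_meas: "r \<in> borel_measurable M" and r_nonneg: "\<And>x. 0 \<le> r x"
    and int_r: "integrable M r" and int_rlnr: "integrable M (\<lambda>x. r x * ln (r x))"
    and B: "B \<in> events" and B_pos: "prob B > 0"
  shows "(\<integral>x. r x * indicator B x \<partial>M) * ln ((\<integral>x. r x * indicator B x \<partial>M) / prob B)
          \<le> (\<integral>x. indicator B x * (r x * ln (r x)) \<partial>M)"
proof -
  define p where "p = (\<integral>x. r x * indicator B x \<partial>M)"
  have int_rB: "integrable M (\<lambda>x. r x * indicator B x)"
    using integrable_mult_indicator[OF B int_r] by (simp add: mult.commute)
  have int_rlnrB: "integrable M (\<lambda>x. indicator B x * (r x * ln (r x)))"
    using integrable_mult_indicator[OF B int_rlnr] by simp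
  have p_nonneg: "0 \<le> p" unfolding p_def using r_nonneg by (intro integral_nonneg_AE) auto
  show ?thesis
  proof (cases "p = 0")
    case True
    then have "AE x in M. r x * indicator B x = 0"
      using integral_nonneg_eq_0_iff_AE[OF int_rB] r_nonneg unfolding p_def by auto
    then have "AE x in M. indicator B x * (r x * ln (r x)) = 0"
      by eventually_elim (auto simp: indicator_def)
    then have "(\<integral>x. indicator B x * (r x * ln (r x)) \<partial>M) = (\<integral>x. 0 \<partial>M)"
      by (intro integral_cong_AE) (use r_meas B in measurable)
    then show ?thesis using True unfolding p_def by simp
  next
    case False
    define c where "c = p / prob B"
    have c_pos: "c > 0" unfolding c_def using False p_nonneg B_pos by auto
    have "(\<integral>x. indicator B x * (r x * ln c + r x - c) \<partial>M) \<le> (\<integral>x. indicator B x * (r x * ln (r x)) \<partial>M)"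
    proof (rule integral_mono[OF _ int_rlnrB])
      have "integrable M (\<lambda>x. r x * ln c + r x - c)"
        using int_r by auto
      from integrable_mult_indicator[OF B this]
      show "integrable M (\<lambda>x. indicator B x * (r x * ln c + r x - c))" by simp
    next
      fix x show "indicator B x * (r x * ln c + r x - c) \<le> indicator B x * (r x * ln (r x))"
        using mult_ln_ge_tangent[OF r_nonneg c_pos, of x] by (auto simp: indicator_def)
    qed
    moreover have "(\<integral>x. indicator B x * (r x * ln c + r x - c) \<partial>M) = p * ln c"
    proof -
      have "(\<lambda>x. indicator B x * (r x * ln c + r x - c)) =
          (\<lambda>x. (ln c + 1) * (r x * indicator B x) - c * indicator B x)"
        by (simp add: fun_eq_iff algebra_simps)
      then have "(\<integral>x. indicator B x * (r x * ln c + r x - c) \<partial>M) = (ln c + 1) * p - c * prob B"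
        unfolding p_def using int_rB B by (simp add: less_top[symmetric])
      then show ?thesis unfolding c_def using B_pos by (simp add: algebra_simps)
    qed
    ultimately show ?thesis unfolding c_def p_def by simp
  qed
qed

section \<open>Reduction to the binary problem\<close>

text \<open>Setting it to \<open>\<infinity>\<close> for \<open>a \<in> {0, 1}\<close> is harmless in \<open>bin_Dstar\<close>:
  there \<open>b \<noteq> a\<close>, so the true divergence is infinite as well.\<close>
definition bin_kl :: "real \<Rightarrow> real \<Rightarrow> real" where
  "bin_kl b a = b * ln (b / a) + (1 - b) * ln ((1 - b) / (1 - a))"

definition bin_KL :: "real \<Rightarrow> real \<Rightarrow> ereal" where
  "bin_KL b a = (if 0 < a \<and> a < 1 then ereal (bin_kl b a) else \<infinity>)"

definition bin_Dstar :: "real \<Rightarrow> real \<Rightarrow> ereal" where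
  "bin_Dstar v a = Inf {bin_KL b a | b. 0 \<le> b \<and> b \<le> 1 \<and> v \<le> 2 * \<bar>b - a\<bar>}"

text \<open>Moving mass \<open>b\<close> onto \<open>A\<close> while keeping the shape of \<open>Q\<close> inside \<open>A\<close> and outside it
  realizes the binary pair \<open>(b, Q A)\<close> exactly.\<close>
lemma exists_probs_tvd_KL_binary:
  assumes M: "sigma_finite_measure M" and Q: "Q \<in> probs M" and A: "A \<in> sets M"
    and a: "0 < measure Q A" "measure Q A < 1" and b: "0 \<le> b" "b \<le> 1"
  shows "\<exists>P\<in>probs M. tvd M P Q = 2 * \<bar>b - measure Q A\<bar> \<and> KL P Q = bin_KL b (measure Q A)"
proof -
  note sQ = probsD[OF Q]
  interpret Q: prob_space Q by (rule sQ(3))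
  define a where "a = measure Q A"
  have a01: "0 < a" "a < 1" using a unfolding a_def by auto
  have A_Q: "A \<in> sets Q" using A sQ(1) by simp
  define u where "u = b / a"
  define w where "w = (1 - b) / (1 - a)"
  define g where "g x = (if x \<in> A then u else w)" for x
  have g_nonneg: "0 \<le> g x" for x unfolding g_def u_def w_def using a01 b by auto
  have g_meas: "g \<in> borel_measurable Q" unfolding g_def using A_Q by measurable
  define P where "P = density Q (\<lambda>x. ennreal (g x))"
  have sets_P: "sets P = sets Q" unfolding P_def by simp
  have "emeasure P (space P) = (\<integral>\<^sup>+ x. ennreal (g x) \<partial>Q)"
    unfolding P_def using g_meas by (subst emeasure_density) (auto intro!: nn_integral_cong)
  also have "\<dots> = ennreal (\<integral>x. g x \<partial>Q)"
    unfolding g_def using A_Q g_nonneg[unfolded g_def]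
    by (intro nn_integral_eq_integral Q.integrable_if_set) auto
  also have "(\<integral>x. g x \<partial>Q) = 1"
    unfolding g_def Q.integral_if_set[OF A_Q] a_def[symmetric] u_def w_def using a01 by simp
  finally have P_prob: "prob_space P" by (intro prob_spaceI) simp
  have ac: "absolutely_continuous Q P"
    unfolding P_def using g_meas by (intro absolutely_continuousI_density) measurable
  have P: "P \<in> probs M"
    unfolding probs_def using sets_P sQ(1) P_prob absolutely_continuous_trans[OF sQ(4) ac sQ(1)]
    by simp
  have "AE x in Q. ennreal (g x) = RN_deriv Q P x"
    unfolding P_def using g_meas by (intro Q.RN_deriv_unique) auto
  then have RN: "AE x in Q. \<phi> (enn2real (RN_deriv Q P x)) = (if x \<in> A then \<phi> u else \<phi> w)" for \<phi>
    by eventually_elim (metis g_def g_nonneg enn2real_ennreal)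
  have two_valued: "integrable Q (\<lambda>x. \<phi> (enn2real (RN_deriv Q P x))) \<and>
      (\<integral>x. \<phi> (enn2real (RN_deriv Q P x)) \<partial>Q) = \<phi> u * a + \<phi> w * (1 - a)"
    if "\<phi> \<in> borel_measurable borel" for \<phi> :: "real \<Rightarrow> real"
  proof -
    have m1: "(\<lambda>x. \<phi> (enn2real (RN_deriv Q P x))) \<in> borel_measurable Q"
      and m2: "(\<lambda>x. if x \<in> A then \<phi> u else \<phi> w) \<in> borel_measurable Q"
      using that A_Q by measurable
    show ?thesis
      using integrable_cong_AE[OF m1 m2 RN] integral_cong_AE[OF m1 m2 RN]
        Q.integrable_if_set[OF A_Q] Q.integral_if_set[OF A_Q] unfolding a_def by simp
  qed
  have "tvd M P Q = \<bar>u - 1\<bar> * a + \<bar>w - 1\<bar> * (1 - a)"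
    using tvd_eq_integral_RN_deriv[OF M Q P ac] two_valued[of "\<lambda>t. \<bar>t - 1\<bar>"] by simp
  also have "\<dots> = 2 * \<bar>b - a\<bar>"
  proof -
    have "u - 1 = (b - a) / a" "w - 1 = (a - b) / (1 - a)"
      unfolding u_def w_def using a01 by (simp_all add: field_simps)
    then show ?thesis using a01 by (simp add: abs_div abs_minus_commute)
  qed
  moreover have "KL P Q = ereal ((u * ln u) * a + (w * ln w) * (1 - a))"
    using KL_eq_integral_RN_deriv[OF sQ(3) P_prob sets_P ac] two_valued[of "\<lambda>t. t * ln t"] by simp
  moreover have "(u * ln u) * a + (w * ln w) * (1 - a) = bin_kl b a"
    unfolding bin_kl_def u_def w_def using a01 by simp
  ultimately show ?thesis using P a01 unfolding a_def bin_KL_def by auto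
qed


text \<open>Data processing for the partition \<open>{B, -B}\<close>.\<close>
lemma bin_KL_le_KL:
  assumes Q: "prob_space Q" and P: "prob_space P" and sets: "sets P = sets Q"
    and B: "B \<in> sets Q" and B_pos: "0 < measure Q B" and B_lt: "measure Q B < 1"
  shows "bin_KL (measure P B) (measure Q B) \<le> KL P Q"
proof (cases "KL P Q = \<infinity>")
  case False
  interpret Q: prob_space Q by fact
  interpret P: prob_space P by fact
  have ac: "absolutely_continuous Q P"
    and int_rlnr: "integrable Q (\<lambda>x. enn2real (RN_deriv Q P x) * ln (enn2real (RN_deriv Q P x)))"
    using KL_finite_imp_integrable[OF Q P sets False] by auto
  define r where "r x = enn2real (RN_deriv Q P x)" for x
  have r_meas: "r \<in> borel_measurable Q" and r_nonneg: "0 \<le> r x" for x unfolding r_def by simp_all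
  have measure_P: "measure P C = (\<integral>x. r x * indicator C x \<partial>Q)" if "C \<in> sets Q" for C
    unfolding r_def using measure_eq_integral_RN_deriv[OF Q P sets ac that] .
  have "integrable Q r" unfolding r_def by (rule integrable_enn2real_RN_deriv[OF Q P sets ac])
  note logsum = Q.log_sum_inequality[OF r_meas r_nonneg this int_rlnr[folded r_def]]
  define B' where "B' = space Q - B"
  have B': "B' \<in> sets Q" "measure Q B' = 1 - measure Q B" "measure P B' = 1 - measure P B"
    unfolding B'_def using B Q.prob_compl P.prob_compl sets sets_eq_imp_space_eq[OF sets] by auto
  have "(\<integral>x. r x * ln (r x) \<partial>Q) =
      (\<integral>x. indicator B x * (r x * ln (r x)) \<partial>Q) + (\<integral>x. indicator B' x * (r x * ln (r x)) \<partial>Q)"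
  proof -
    have "(\<integral>x. r x * ln (r x) \<partial>Q) =
        (\<integral>x. indicator B x * (r x * ln (r x)) + indicator B' x * (r x * ln (r x)) \<partial>Q)"
      by (intro Bochner_Integration.integral_cong) (auto simp: B'_def indicator_def)
    then show ?thesis
      using integrable_mult_indicator[OF B int_rlnr[folded r_def]]
        integrable_mult_indicator[OF B'(1) int_rlnr[folded r_def]] by simp
  qed
  moreover have "KL P Q = ereal (\<integral>x. r x * ln (r x) \<partial>Q)"
    unfolding r_def by (rule KL_eq_integral_RN_deriv[OF Q P sets ac int_rlnr])
  moreover have "measure P B * ln (measure P B / measure Q B) \<le>
      (\<integral>x. indicator B x * (r x * ln (r x)) \<partial>Q)"
    using logsum[OF B B_pos] measure_P[OF B] by simp
  moreover have "(1 - measure P B) * ln ((1 - measure P B) / (1 - measure Q B)) \<le>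
      (\<integral>x. indicator B' x * (r x * ln (r x)) \<partial>Q)"
    using logsum[OF B'(1)] measure_P[OF B'(1)] B'(2,3) B_lt by simp
  ultimately show ?thesis using B_pos B_lt by (simp add: bin_KL_def bin_kl_def)
qed simp


lemma tvd_eq_twice_excess:
  assumes M: "sigma_finite_measure M" and Q: "Q \<in> probs M" and P: "P \<in> probs M"
    and ac: "absolutely_continuous Q P"
    and A_def: "A = {x \<in> space Q. 1 < enn2real (RN_deriv Q P x)}"
  shows "A \<in> sets Q" "tvd M P Q = 2 * (measure P A - measure Q A)"
proof -
  note sQ = probsD[OF Q] and sP = probsD[OF P]
  interpret Q: prob_space Q by (rule sQ(3))
  have sets: "sets P = sets Q" using sP(1) sQ(1) by simp
  define r where "r x = enn2real (RN_deriv Q P x)" for x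
  have r_meas: "r \<in> borel_measurable Q" unfolding r_def by simp
  show A: "A \<in> sets Q" unfolding A_def r_def[symmetric] using r_meas by measurable
  have int_r: "integrable Q r"
    unfolding r_def by (rule integrable_enn2real_RN_deriv[OF sQ(3) sP(3) sets ac])
  have measure_P: "measure P C = (\<integral>x. r x * indicator C x \<partial>Q)" if "C \<in> sets Q" for C
    unfolding r_def by (rule measure_eq_integral_RN_deriv[OF sQ(3) sP(3) sets ac that])
  have "(\<integral>x. r x \<partial>Q) = measure P (space Q)"
    using measure_P[of "space Q"] by (simp cong: Bochner_Integration.integral_cong)
  then have int_r_1: "(\<integral>x. r x \<partial>Q) = 1"
    using sets_eq_imp_space_eq[OF sets] prob_space.prob_space[OF sP(3)] by simp
  have "\<bar>r x - 1\<bar> = 2 * (r x * indicator A x) - 2 * indicator A x - (r x - 1)" if "x \<in> space Q" for x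
    using that unfolding A_def r_def[symmetric] by (auto simp: indicator_def)
  then have "(\<integral>x. \<bar>r x - 1\<bar> \<partial>Q) = (\<integral>x. 2 * (r x * indicator A x) - 2 * indicator A x - (r x - 1) \<partial>Q)"
    by (intro Bochner_Integration.integral_cong) auto
  also have "\<dots> = 2 * (\<integral>x. r x * indicator A x \<partial>Q) - 2 * (\<integral>x. indicator A x \<partial>Q) - ((\<integral>x. r x \<partial>Q) - 1)"
  proof -
    have "integrable Q (\<lambda>x. r x * indicator A x)"
      using integrable_mult_indicator[OF A int_r] by (simp add: mult.commute)
    moreover have "integrable Q (\<lambda>x. indicator A x :: real)"
      using A by (simp add: less_top[symmetric])
    ultimately show ?thesis using int_r by (simp add: Q.prob_space)
  qed
  also have "\<dots> = 2 * measure P A - 2 * measure Q A"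
    using int_r_1 measure_P[OF A] A by simp
  finally show "tvd M P Q = 2 * (measure P A - measure Q A)"
    using tvd_eq_integral_RN_deriv[OF M Q P ac] unfolding r_def by simp
qed


lemma exists_bin_KL_le_KL:
  assumes M: "sigma_finite_measure M" and Q: "Q \<in> probs M" and P: "P \<in> probs M"
    and v: "0 < v" "v \<le> tvd M P Q" and fin: "KL P Q \<noteq> \<infinity>"
  shows "\<exists>A\<in>sets M. \<exists>b. 0 \<le> b \<and> b \<le> 1 \<and> v \<le> 2 * \<bar>b - measure Q A\<bar> \<and>
           bin_KL b (measure Q A) \<le> KL P Q"
proof -
  note sQ = probsD[OF Q] and sP = probsD[OF P]
  have sets: "sets P = sets Q" using sP(1) sQ(1) by simp
  have ac: "absolutely_continuous Q P"
    using KL_finite_imp_integrable[OF sQ(3) sP(3) sets fin] by simp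
  define A where "A = {x \<in> space Q. 1 < enn2real (RN_deriv Q P x)}"
  note excess = tvd_eq_twice_excess[OF M Q P ac A_def]
  define a where "a = measure Q A"
  define b where "b = measure P A"
  have b01: "0 \<le> b" "b \<le> 1" unfolding b_def using prob_space.prob_le_1[OF sP(3)] by auto
  have gap: "v \<le> 2 * (b - a)" using v excess(2) unfolding a_def b_def by simp
  have "0 < a"
  proof (rule ccontr)
    assume "\<not> 0 < a"
    then have "A \<in> null_sets Q"
      using excess(1) measure_nonneg[of Q A] unfolding a_def
      by (simp add: finite_measure.emeasure_eq_measure[OF prob_space.finite_measure[OF sQ(3)]] null_sets_def)
    then have "b = 0" using ac unfolding absolutely_continuous_def b_def by (auto simp: measure_def null_sets_def)
    moreover have "0 \<le> a" unfolding a_def by simp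
    ultimately show False using gap v \<open>\<not> 0 < a\<close> by simp
  qed
  moreover have "a < 1" using gap b01 v by simp
  ultimately have "bin_KL b a \<le> KL P Q"
    using bin_KL_le_KL[OF sQ(3) sP(3) sets excess(1)] unfolding a_def b_def by simp
  moreover have "v \<le> 2 * \<bar>b - a\<bar>"
  proof -
    have "0 < b - a" using gap v by simp
    then show ?thesis using gap by simp
  qed
  moreover have "A \<in> sets M" using excess(1) sQ(1) by simp
  ultimately show ?thesis using b01 unfolding a_def by blast
qed

lemma Dstar_eq_Inf_bin_Dstar:
  assumes M: "sigma_finite_measure M" and Q: "Q \<in> probs M" and v: "0 < v"
  shows "Dstar M v Q = Inf {bin_Dstar v (measure Q A) | A. A \<in> sets M}"
proof (rule antisym)
  show "Dstar M v Q \<le> Inf {bin_Dstar v (measure Q A) | A. A \<in> sets M}"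
  proof (rule Inf_greatest, clarify)
    fix A assume A: "A \<in> sets M"
    show "Dstar M v Q \<le> bin_Dstar v (measure Q A)"
      unfolding bin_Dstar_def
    proof (rule Inf_greatest, clarify)
      fix b assume b: "0 \<le> b" "b \<le> 1" "v \<le> 2 * \<bar>b - measure Q A\<bar>"
      show "Dstar M v Q \<le> bin_KL b (measure Q A)"
      proof (cases "0 < measure Q A \<and> measure Q A < 1")
        case True
        then obtain P where "P \<in> probs M" "tvd M P Q = 2 * \<bar>b - measure Q A\<bar>"
          "KL P Q = bin_KL b (measure Q A)"
          using exists_probs_tvd_KL_binary[OF M Q A _ _ b(1,2)] by blast
        then show ?thesis unfolding Dstar_def using b(3) by (intro Inf_lower) force
      next
        case False
        then show ?thesis by (auto simp: bin_KL_def)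
      qed
    qed
  qed
next
  show "Inf {bin_Dstar v (measure Q A) | A. A \<in> sets M} \<le> Dstar M v Q"
    unfolding Dstar_def
  proof (rule Inf_greatest, clarify)
    fix P assume P: "P \<in> probs M" "v \<le> tvd M P Q"
    show "Inf {bin_Dstar v (measure Q A) | A. A \<in> sets M} \<le> KL P Q"
    proof (cases "KL P Q = \<infinity>")
      case False
      then obtain A b where A: "A \<in> sets M" and b: "0 \<le> b" "b \<le> 1"
        "v \<le> 2 * \<bar>b - measure Q A\<bar>" "bin_KL b (measure Q A) \<le> KL P Q"
        using exists_bin_KL_le_KL[OF M Q P(1) v P(2)] by blast
      have "Inf {bin_Dstar v (measure Q A) | A. A \<in> sets M} \<le> bin_Dstar v (measure Q A)"
        using A by (intro Inf_lower) auto
      also have "\<dots> \<le> bin_KL b (measure Q A)"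
        unfolding bin_Dstar_def using b by (intro Inf_lower) auto
      finally show ?thesis using b(4) by simp
    qed simp
  qed
qed

section \<open>The binary problem\<close>

lemma bin_kl_eq_sum_mult_ln:
  assumes "0 < a" "a < 1" "0 \<le> b" "b \<le> 1"
  shows "bin_kl b a = b * ln b - b * ln a + (1 - b) * ln (1 - b) - (1 - b) * ln (1 - a)"
proof -
  have "b * ln (b / a) = b * ln b - b * ln a"
    using assms by (cases "b = 0") (auto simp: ln_div algebra_simps)
  moreover have "(1 - b) * ln ((1 - b) / (1 - a)) = (1 - b) * ln (1 - b) - (1 - b) * ln (1 - a)"
    using assms by (cases "b = 1") (auto simp: ln_div algebra_simps)
  ultimately show ?thesis unfolding bin_kl_def by simp
qed

lemma bin_kl_one_minus: "bin_kl (1 - b) (1 - a) = bin_kl b a"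
  unfolding bin_kl_def by simp

lemma bin_KL_one_minus: "bin_KL (1 - b) (1 - a) = bin_KL b a"
  unfolding bin_KL_def bin_kl_one_minus by auto

lemma continuous_on_mult_ln: "continuous_on {0..} (\<lambda>t::real. t * ln t)"
  unfolding continuous_on_def
proof
  fix x :: real assume x: "x \<in> {0..}"
  show "((\<lambda>t. t * ln t) \<longlongrightarrow> x * ln x) (at x within {0..})"
  proof (cases "x = 0")
    case True
    have "((\<lambda>t::real. t * ln t) \<longlongrightarrow> 0) (at_right 0)" by real_asymp
    then show ?thesis using True by (simp add: at_within_Ici_at_right)
  next
    case False
    then have "isCont (\<lambda>t. t * ln t) x" using x by (intro continuous_intros) auto
    then show ?thesis by (metis isCont_def tendsto_within_subset subset_UNIV)
  qed
qed

lemma continuous_on_bin_kl: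
  assumes "0 < e"
  shows "continuous_on {(a, b). e \<le> a \<and> a \<le> 1 - e \<and> 0 \<le> b \<and> b \<le> 1} (\<lambda>(a, b). bin_kl b a)"
proof -
  let ?S = "{(a::real, b::real). e \<le> a \<and> a \<le> 1 - e \<and> 0 \<le> b \<and> b \<le> 1}"
  have "continuous_on ?S (\<lambda>p. snd p * ln (snd p))"
    by (rule continuous_on_compose2[OF continuous_on_mult_ln]) (auto intro!: continuous_intros)
  moreover have "continuous_on ?S (\<lambda>p. (1 - snd p) * ln (1 - snd p))"
    by (rule continuous_on_compose2[OF continuous_on_mult_ln]) (auto intro!: continuous_intros)
  ultimately have "continuous_on ?S (\<lambda>p. snd p * ln (snd p) - snd p * ln (fst p) +
      (1 - snd p) * ln (1 - snd p) - (1 - snd p) * ln (1 - fst p))"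
    using assms by (auto intro!: continuous_intros)
  then show ?thesis
    by (rule continuous_on_cong[THEN iffD1, rotated -1]) (use assms in \<open>auto simp: bin_kl_eq_sum_mult_ln\<close>)
qed

text \<open>Since \<open>t ln t \<ge> -1\<close>, only the cross term \<open>- b ln a\<close> can be large, and it is once \<open>a\<close> is
  small while \<open>b \<ge> \<delta>\<close>.\<close>
lemma bin_kl_gt_near_zero:
  assumes \<eta>: "0 < \<eta>" "\<eta> \<le> \<delta>" "\<delta> * ln \<eta> < - (r + 1)"
    and a: "0 < a" "a < \<eta>" "a < 1" and b: "0 \<le> b" "b \<le> 1" "\<delta> \<le> \<bar>b - a\<bar>"
  shows "r < bin_kl b a"
proof -
  have "b * ln 1 + b - 1 \<le> b * ln b" "(1 - b) * ln 1 + (1 - b) - 1 \<le> (1 - b) * ln (1 - b)"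
    using b by (intro mult_ln_ge_tangent; simp)+
  moreover have "(1 - b) * ln (1 - a) \<le> 0" using a b by (intro mult_nonneg_nonpos) auto
  ultimately have lower: "- (b * ln a) - 1 \<le> bin_kl b a"
    using a b by (simp add: bin_kl_eq_sum_mult_ln)
  have "\<delta> \<le> b" using a b \<eta> by (auto simp: abs_if split: if_splits)
  moreover have "ln a \<le> 0" using a by simp
  ultimately have "b * ln a \<le> \<delta> * ln a" by (intro mult_right_mono_neg)
  also have "\<delta> * ln a < \<delta> * ln \<eta>" using a \<eta> by (intro mult_strict_left_mono) auto
  finally show ?thesis using lower \<eta>(3) by linarith
qed

lemma bin_Dstar_one_minus: "bin_Dstar v (1 - a) = bin_Dstar v a"
proof -
  have "{bin_KL b (1 - a) | b. 0 \<le> b \<and> b \<le> 1 \<and> v \<le> 2 * \<bar>b - (1 - a)\<bar>}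
      = {bin_KL b a | b. 0 \<le> b \<and> b \<le> 1 \<and> v \<le> 2 * \<bar>b - a\<bar>}"
  proof (intro set_eqI iffI)
    fix x assume "x \<in> {bin_KL b (1 - a) | b. 0 \<le> b \<and> b \<le> 1 \<and> v \<le> 2 * \<bar>b - (1 - a)\<bar>}"
    then obtain b where "x = bin_KL (1 - (1 - b)) (1 - a)" "0 \<le> b" "b \<le> 1" "v \<le> 2 * \<bar>b - (1 - a)\<bar>"
      by auto
    then show "x \<in> {bin_KL b a | b. 0 \<le> b \<and> b \<le> 1 \<and> v \<le> 2 * \<bar>b - a\<bar>}"
      unfolding bin_KL_one_minus by (intro CollectI exI[of _ "1 - b"]) (auto simp: abs_if split: if_splits)
  next
    fix x assume "x \<in> {bin_KL b a | b. 0 \<le> b \<and> b \<le> 1 \<and> v \<le> 2 * \<bar>b - a\<bar>}"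
    then obtain b where "x = bin_KL (1 - b) (1 - a)" "0 \<le> b" "b \<le> 1" "v \<le> 2 * \<bar>b - a\<bar>"
      by (auto simp: bin_KL_one_minus)
    then show "x \<in> {bin_KL b (1 - a) | b. 0 \<le> b \<and> b \<le> 1 \<and> v \<le> 2 * \<bar>b - (1 - a)\<bar>}"
      by (intro CollectI exI[of _ "1 - b"]) (auto simp: abs_if split: if_splits)
  qed
  then show ?thesis unfolding bin_Dstar_def by simp
qed

lemma bin_Dstar_0: "bin_Dstar v 0 = \<infinity>" and bin_Dstar_1: "bin_Dstar v 1 = \<infinity>"
  unfolding bin_Dstar_def bin_KL_def by (auto intro!: Inf_eqI)


text \<open>Near the boundary the binary divergence exceeds any prescribed value, so the infimum can
  be sought on a compact set of pairs \<open>(a, b)\<close> with \<open>a\<close> bounded away from \<open>0\<close> and \<open>1\<close>.\<close>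
lemma bin_Dstar_attains_Inf:
  assumes R: "closed R" "a0 \<in> R" and v: "0 < v"
  shows "\<exists>a\<in>R. \<forall>a'\<in>R. bin_Dstar v a \<le> bin_Dstar v a'"
proof (cases "\<exists>a\<in>R. \<exists>b. 0 \<le> b \<and> b \<le> 1 \<and> v \<le> 2 * \<bar>b - a\<bar> \<and> bin_KL b a \<noteq> \<infinity>")
  case False
  then have "bin_Dstar v a = \<infinity>" if "a \<in> R" for a
    using that unfolding bin_Dstar_def by (intro antisym Inf_greatest) auto
  then show ?thesis using R(2) by auto
next
  case True
  then obtain a0 b0 where a0: "a0 \<in> R" and b0: "0 \<le> b0" "b0 \<le> 1" "v \<le> 2 * \<bar>b0 - a0\<bar>"
    and fin: "bin_KL b0 a0 \<noteq> \<infinity>" by blast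
  have a01: "0 < a0" "a0 < 1" using fin by (auto simp: bin_KL_def split: if_splits)
  define r0 where "r0 = bin_kl b0 a0"
  define \<delta> where "\<delta> = v / 2"
  have \<delta>: "0 < \<delta>" unfolding \<delta>_def using v by simp
  define \<eta> where "\<eta> = min (min \<delta> (min a0 (1 - a0))) (exp (- (r0 + 1) / \<delta>) / 2)"
  have \<eta>: "0 < \<eta>" "\<eta> \<le> \<delta>" "\<eta> \<le> a0" "\<eta> \<le> 1 - a0"
    unfolding \<eta>_def using \<delta> a01 by auto
  have "\<eta> \<le> exp (- (r0 + 1) / \<delta>) / 2" unfolding \<eta>_def by (rule min.cobounded2)
  then have "\<eta> < exp (- (r0 + 1) / \<delta>)" using exp_gt_zero[of "- (r0 + 1) / \<delta>"] by linarith
  then have "ln \<eta> < - (r0 + 1) / \<delta>" using \<eta>(1) by (metis ln_exp ln_less_cancel_iff exp_gt_zero)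
  then have \<eta>_ln: "\<delta> * ln \<eta> < - (r0 + 1)" using \<delta> by (simp add: field_simps)
  define K where "K = {(a, b). a \<in> R \<and> \<eta> \<le> a \<and> a \<le> 1 - \<eta> \<and> 0 \<le> b \<and> b \<le> 1 \<and> v \<le> 2 * \<bar>b - a\<bar>}"
  have "K = ({0..1} \<times> {0..1}) \<inter> ((R \<times> UNIV) \<inter>
      ({p. \<eta> \<le> fst p} \<inter> {p. fst p \<le> 1 - \<eta>} \<inter> {p. v \<le> 2 * \<bar>snd p - fst p\<bar>}))"
    unfolding K_def using \<eta> by auto
  then have "compact K"
    using R(1) by (auto intro!: compact_Int_closed compact_Times closed_Int closed_Times
        closed_Collect_le continuous_intros)
  moreover have K0: "(a0, b0) \<in> K" unfolding K_def using a0 b0 \<eta> by auto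
  moreover have "continuous_on K (\<lambda>(a, b). bin_kl b a)"
    by (rule continuous_on_subset[OF continuous_on_bin_kl[OF \<eta>(1)]]) (auto simp: K_def)
  ultimately obtain a1 b1 where K1: "(a1, b1) \<in> K" and min: "\<And>a b. (a, b) \<in> K \<Longrightarrow> bin_kl b1 a1 \<le> bin_kl b a"
    using continuous_attains_inf[of K "\<lambda>(a, b). bin_kl b a"] by fastforce
  have a1: "a1 \<in> R" "0 < a1" "a1 < 1" "0 \<le> b1" "b1 \<le> 1" "v \<le> 2 * \<bar>b1 - a1\<bar>"
    using K1 \<eta> unfolding K_def by auto
  have r0: "bin_kl b1 a1 \<le> r0" unfolding r0_def by (rule min[OF K0])
  have key: "ereal (bin_kl b1 a1) \<le> bin_KL b a"
    if a: "a \<in> R" and b: "0 \<le> b" "b \<le> 1" "v \<le> 2 * \<bar>b - a\<bar>" for a b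
  proof (cases "0 < a \<and> a < 1")
    case True
    have gap: "\<delta> \<le> \<bar>b - a\<bar>" using b(3) unfolding \<delta>_def by simp
    consider "a < \<eta>" | "\<eta> \<le> a \<and> a \<le> 1 - \<eta>" | "1 - \<eta> < a" by linarith
    then have "bin_kl b1 a1 \<le> bin_kl b a"
    proof cases
      case 1
      have "r0 < bin_kl b a" using bin_kl_gt_near_zero[OF \<eta>(1,2) \<eta>_ln _ 1] True b gap by simp
      then show ?thesis using r0 by simp
    next
      case 2
      then show ?thesis using a b by (intro min) (auto simp: K_def)
    next
      case 3
      have "r0 < bin_kl (1 - b) (1 - a)"
        using bin_kl_gt_near_zero[OF \<eta>(1,2) \<eta>_ln, of "1 - a" "1 - b"] True b gap 3
        by (simp add: abs_minus_commute)
      then show ?thesis using r0 by (simp add: bin_kl_one_minus)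
    qed
    then show ?thesis using True by (simp add: bin_KL_def)
  qed (auto simp: bin_KL_def)
  have "bin_Dstar v a1 \<le> bin_Dstar v a'" if "a' \<in> R" for a'
  proof -
    have "bin_Dstar v a1 \<le> bin_KL b1 a1"
      unfolding bin_Dstar_def using a1 by (intro Inf_lower) auto
    also have "\<dots> = ereal (bin_kl b1 a1)" using a1 by (simp add: bin_KL_def)
    also have "\<dots> \<le> bin_Dstar v a'"
      unfolding bin_Dstar_def using key[OF that] by (intro Inf_greatest) auto
    finally show ?thesis .
  qed
  then show ?thesis using a1(1) by blast
qed

section \<open>Reduction to a two-point space\<close>

lemma Dstar_distr_two_point:
  assumes Q: "Q \<in> probs M" and A: "A \<in> sets M" and v: "0 < v"
  shows "Dstar (count_space {1, 2}) v (distr Q (count_space {1, 2::nat}) (\<lambda>x. if x \<in> A then 1 else 2))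
    = bin_Dstar v (measure Q A)"
proof -
  note sQ = probsD[OF Q]
  interpret Q: prob_space Q by (rule sQ(3))
  define \<pi> where "\<pi> x = (if x \<in> A then 1 else 2::nat)" for x
  let ?C = "count_space {1, 2::nat}"
  let ?Q' = "distr Q ?C \<pi>"
  have \<pi>_meas: "\<pi> \<in> measurable Q ?C"
    unfolding \<pi>_def using A sQ(1) by (auto intro!: measurable_If_set)
  have Q': "?Q' \<in> probs ?C"
    unfolding probs_def
  proof (intro CollectI conjI)
    show "prob_space ?Q'" by (rule Q.prob_space_distr[OF \<pi>_meas])
    show "absolutely_continuous ?C ?Q'"
      unfolding absolutely_continuous_def
      by (auto simp: null_sets_def emeasure_count_space card_eq_0_iff split: if_splits)
  qed simp
  have measure_Q': "measure ?Q' B = measure Q {x \<in> space Q. \<pi> x \<in> B}" if "B \<subseteq> {1, 2}" for B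
    using that \<pi>_meas by (subst measure_distr) (auto simp: vimage_def Int_def conj_commute)
  have "{x \<in> space Q. \<pi> x \<in> {1}} = A" using A sQ(1) sets.sets_into_space unfolding \<pi>_def by auto
  then have Q'_1: "measure ?Q' {1} = measure Q A" using measure_Q'[of "{1}"] by simp
  have Q'_values: "measure ?Q' B \<in> {0, measure Q A, 1 - measure Q A, 1}" if B: "B \<subseteq> {1, 2}" for B
  proof -
    have "{x \<in> space Q. \<pi> x \<in> {2}} = space Q - A" "{x \<in> space Q. \<pi> x \<in> {1, 2}} = space Q"
      unfolding \<pi>_def by auto
    moreover have "measure Q (space Q - A) = 1 - measure Q A" using A sQ(1) Q.prob_compl by simp
    moreover have "B = {} \<or> B = {1} \<or> B = {2} \<or> B = {1, 2}" using B by auto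
    ultimately show ?thesis using measure_Q'[OF B] Q'_1 by (auto simp: Q.prob_space)
  qed
  have "bin_Dstar v (measure Q A) \<le> bin_Dstar v (measure ?Q' B)" if "B \<subseteq> {1, 2}" for B
    using Q'_values[OF that] by (auto simp: bin_Dstar_0 bin_Dstar_1 bin_Dstar_one_minus)
  then have "Inf {bin_Dstar v (measure ?Q' B) | B. B \<in> sets ?C} = bin_Dstar v (measure Q A)"
    using Q'_1 by (intro antisym Inf_greatest Inf_lower) (auto intro!: exI[of _ "{1}"])
  then have "Dstar ?C v ?Q' = bin_Dstar v (measure Q A)"
    using Dstar_eq_Inf_bin_Dstar[OF sigma_finite_measure_count_space_finite Q' v] by simp
  then show ?thesis unfolding \<pi>_def .
qed


theorem lemma3:
  fixes M :: "'a measure" and Q :: "'a measure" and v :: real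
  assumes "sigma_finite_measure M"
    and "Q \<in> probs M"
    and "\<exists>A\<in>sets M. 0 < measure Q A \<and> measure Q A < 1"
    and "v > 0"
  shows "\<exists>\<pi> \<in> measurable M (count_space {1, 2::nat}).
           Dstar M v Q = Dstar (count_space {1, 2}) v (distr Q (count_space {1, 2}) \<pi>)"
proof -
  note sQ = probsD[OF assms(2)]
  have "closed {measure Q A | A. A \<in> sets M}"
    using prob_space.closed_range_prob[OF sQ(3)] sQ(1) by simp
  moreover have "measure Q {} \<in> {measure Q A | A. A \<in> sets M}" by blast
  ultimately obtain a where a: "a \<in> {measure Q A | A. A \<in> sets M}"
    and a_min: "\<forall>a'\<in>{measure Q A | A. A \<in> sets M}. bin_Dstar v a \<le> bin_Dstar v a'"
    using bin_Dstar_attains_Inf[OF _ _ assms(4)] by blast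
  then obtain A where A: "A \<in> sets M" "a = measure Q A" by blast
  have "Dstar M v Q = bin_Dstar v (measure Q A)"
    unfolding Dstar_eq_Inf_bin_Dstar[OF assms(1,2,4)]
    using A a_min by (intro antisym Inf_lower Inf_greatest) auto
  moreover have "(\<lambda>x. if x \<in> A then 1 else 2::nat) \<in> measurable M (count_space {1, 2})"
    using A(1) by (auto intro!: measurable_If_set)
  ultimately show ?thesis using Dstar_distr_two_point[OF assms(2) A(1) assms(4)]
    by (intro bexI[of _ "\<lambda>x. if x \<in> A then 1 else 2"]) simp_all
qed

end
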